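(* Assume the hypotheses of the following setting: $(X_t)_{t\in[0,1]}$ is a centered process as in the context whose KL coefficients $(Z_k)_{k\ge1}$ are mutually independent, each $Z_k$ sub-Gaussian with mean $0$ and parameter $\sqrt{\lambda_k}$; $c_g\in\mathbb R$, $K_g\ge0$, and for each $t$, $g_t:\mathbb R\to\mathbb R$ satisfies $g_t(x)-g_t(y)\le\max(|e^{c_gx}-e^{c_gy}|,K_g|x-y|)$ for all $x,y$; $S_t=g_t(X_t)$ and $S'_t=g_t(X'_t)$ with $X'_t=\sum_{k=1}^{L_X(\epsilon)}Z_ke_k(t)$. Let $T\ge1$, $t_1,\dots,t_T\in[0,1]$, $w_1,\dots,w_T\ge0$ with $\sum_iw_i=1$, and $f:\mathbb R^T\to\mathbb R$ with $|f(x)-f(y)|\le\sum_iw_i|x_i-y_i|$ for all $x,y\in\mathbb R^T$. Then there is a constant $C$ independent of $\epsilon$, $T$, the $t_i$ and the $w_i$ such that for all $\epsilon\in(0,1]$, $$\mathbb E\Big[\big(f(S_{t_1},\dots,S_{t_T})-f(S'_{t_1},\dots,S'_{t_T})\big)^2\Big]\le C\epsilon^2 .$$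
   Context: Standing setup: $(X_t)_{t\in[0,1]}$ is a centered stochastic process with $\mathbb E[X_t^2]<\infty$ whose covariance $k_X(s,t)=\mathbb E[X_sX_t]$ is continuous on $[0,1]^2$. Let $\mathcal K$ be the integral operator $(\mathcal Kf)(t)=\int_0^1k_X(s,t)f(s)\,ds$ on $L^2([0,1])$, with orthonormal eigenfunctions $(e_k)_{k\ge1}$ and eigenvalues $\lambda_1\ge\lambda_2\ge\dots\ge0$. The Karhunen–Loève (KL) expansion is $X_t=\sum_{k\ge1}Z_ke_k(t)$ with $Z_k=\int_0^1X_te_k(t)\,dt$, converging in $L^2(\mathbb P)$ uniformly in $t$; the $Z_k$ are centered and uncorrelated with $\mathbb E[Z_k^2]=\lambda_k$. The truncation index $L_X(\epsilon)$ is the smallest natural number $L$ such that $\mathbb E\big[(\sum_{k=1}^{L}Z_ke_k(t)-X_t)^2\big]\le\epsilon^2$ for all $t\in[0,1]$. A real random variable $W$ with mean $m$ is sub-Gaussian with parameter $s\ge0$ if $\mathbb E[\exp(\theta(W-m))]\le\exp(\theta^2s^2/2)$ for all $\theta\in\mathbb R$. *)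

theory Defs
  imports "HOL-Probability.Probability"
begin

text \<open>Karhunen-Loeve coefficient Z_k = int_0^1 X_t e_k(t) dt (pathwise integral).
  Indices are shifted: the paper's e_1, e_2, ... are e 0, e 1, ... here.\<close>
definition KL_coeff :: "(real \<Rightarrow> 'a \<Rightarrow> real) \<Rightarrow> (nat \<Rightarrow> real \<Rightarrow> real) \<Rightarrow> nat \<Rightarrow> 'a \<Rightarrow> real" where
  "KL_coeff X e k \<omega> = (LINT t:{0..1}|lborel. X t \<omega> * e k t)"

definition cov_kernel :: "'a measure \<Rightarrow> (real \<Rightarrow> 'a \<Rightarrow> real) \<Rightarrow> real \<Rightarrow> real \<Rightarrow> real" where
  "cov_kernel M X s t = (\<integral>\<omega>. X s \<omega> * X t \<omega> \<partial>M)"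

definition KL_trunc :: "'a measure \<Rightarrow> (real \<Rightarrow> 'a \<Rightarrow> real) \<Rightarrow> (nat \<Rightarrow> real \<Rightarrow> real) \<Rightarrow> real \<Rightarrow> nat" where
  "KL_trunc M X e \<epsilon> = (LEAST L::nat. \<forall>t\<in>{0..1}.
      (\<integral>\<omega>. ((\<Sum>k<L. KL_coeff X e k \<omega> * e k t) - X t \<omega>)\<^sup>2 \<partial>M) \<le> \<epsilon>\<^sup>2)"

definition subgaussian :: "'a measure \<Rightarrow> ('a \<Rightarrow> real) \<Rightarrow> real \<Rightarrow> real \<Rightarrow> bool" where
  "subgaussian M W m s \<longleftrightarrow> integrable M W \<and> (\<integral>\<omega>. W \<omega> \<partial>M) = m \<and> s \<ge> 0 \<and>
     (\<forall>\<theta>::real. integrable M (\<lambda>\<omega>. exp (\<theta> * (W \<omega> - m))) \<and>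
        (\<integral>\<omega>. exp (\<theta> * (W \<omega> - m)) \<partial>M) \<le> exp (\<theta>\<^sup>2 * s\<^sup>2 / 2))"

end

(* Write X^L_t = sum_{k<L} Z_k e_k(t), L = L_X(eps) and D = X_t - X^L_t.  The growth condition
   on g_t and AM-GM with weight eps^2 give
     (g_t X_t - g_t X^L_t)^2 <= c_g^2 D^4 / (2 eps^2)
                                + 4 c_g^2 eps^2 (exp (4 c_g X_t) + exp (4 c_g X^L_t)) + K_g^2 D^2,
   and Jensen turns the weighted Lipschitz bound on f into a convex combination of these
   majorants over the t_i, so it suffices to show that each term is O(eps^2) in expectation.
   Since E[Z_j Z_k] = lam_k [j = k] (eigen equation and independence), the variance proxy
   sum_{k<L} lam_k e_k(t)^2 of the sub-Gaussian sum X^L_t equals k_X(t,t) - E[(X^L_t - X_t)^2].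
   Hence the exponential moments of X^L_t are bounded uniformly by sup k_X, and the tail sums
   X^N_t - X^L_t have variance proxy at most eps^2, so E[D^4] <= 84 eps^4.  Both bounds pass to
   X_t by Fatou along an almost surely convergent subsequence of the partial sums. *)

theory Submission
  imports Defs
begin

lemma power4_div_24_le_exp:
  assumes "0 \<le> (x::real)"
  shows "x^4 / 24 \<le> exp x"
proof -
  obtain t where "exp x = (\<Sum>m<5. x ^ m / fact m) + exp t / fact 5 * x ^ 5"
    using Maclaurin_exp_le[of x 5] by blast
  moreover have "(\<Sum>m<5. x ^ m / fact m) = 1 + x + x\<^sup>2/2 + x^3/6 + x^4/24"
    by (simp add: numeral_eq_Suc fact_numeral lessThan_Suc)
  ultimately show ?thesis
    using assms by (simp add: add_nonneg_nonneg)
qed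

lemma exp_abs_le_exp_plus_exp_minus: "exp \<bar>x\<bar> \<le> exp x + exp (- x :: real)"
  by (cases "0 \<le> x") (simp_all add: add_increasing add_increasing2)

lemma power4_le_exp_plus_exp_minus: "(x::real)^4 \<le> 24 * (exp x + exp (- x))"
proof -
  have "\<bar>x\<bar>^4 \<le> 24 * exp \<bar>x\<bar>"
    using power4_div_24_le_exp[of "\<bar>x\<bar>"] by simp
  then show ?thesis
    using exp_abs_le_exp_plus_exp_minus[of x] by (simp add: power_even_abs_numeral)
qed

lemma power2_le_exp_plus_exp_minus: "(x::real)\<^sup>2 \<le> 2 * (exp x + exp (- x))"
proof -
  have "\<bar>x\<bar>\<^sup>2 \<le> 2 * exp \<bar>x\<bar>"
    using exp_lower_Taylor_quadratic[of "\<bar>x\<bar>"] by simp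
  then show ?thesis
    using exp_abs_le_exp_plus_exp_minus[of x] by simp
qed

lemma abs_exp_diff_le: "\<bar>exp a - exp b\<bar> \<le> \<bar>a - b\<bar> * (exp a + exp (b::real))"
proof -
  have *: "exp a - exp b \<le> (a - b) * (exp a + exp b)" if "b \<le> a" for a b :: real
  proof -
    have "exp a * (1 + (b - a)) \<le> exp b"
      using exp_ge_add_one_self[of "b - a"] by (simp add: exp_diff field_simps)
    then have "exp a - exp b \<le> (a - b) * exp a"
      by (simp add: algebra_simps)
    also have "\<dots> \<le> (a - b) * (exp a + exp b)"
      using that by (intro mult_left_mono) auto
    finally show ?thesis .
  qed
  show ?thesis
    using *[of b a] *[of a b] by (cases "b \<le> a") (auto simp: abs_if algebra_simps)
qed

(* 8 (a^4 + b^4) - (a + b)^4 = (a - b)^2 (7 a^2 + 10 a b + 7 b^2) *)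
lemma power4_add_le: "((a::real) + b)^4 \<le> 8 * (a^4 + b^4)"
proof -
  have "0 \<le> 5 * (a + b)\<^sup>2 + 2 * a\<^sup>2 + 2 * b\<^sup>2"
    by simp
  then have "0 \<le> (a - b)\<^sup>2 * (7 * a\<^sup>2 + 10 * a * b + 7 * b\<^sup>2)"
    by (intro mult_nonneg_nonneg) (simp_all add: power2_sum algebra_simps)
  then show ?thesis
    by (simp add: power2_eq_square power4_eq_xxxx algebra_simps eval_nat_numeral)
qed

lemma square_weighted_sum_le:
  fixes w u :: "'i \<Rightarrow> real"
  assumes "\<And>i. i \<in> I \<Longrightarrow> 0 \<le> w i" "sum w I = 1"
  shows "(\<Sum>i\<in>I. w i * u i)\<^sup>2 \<le> (\<Sum>i\<in>I. w i * (u i)\<^sup>2)"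
proof -
  define m where "m = (\<Sum>i\<in>I. w i * u i)"
  have "0 \<le> (\<Sum>i\<in>I. w i * (u i - m)\<^sup>2)"
    using assms(1) by (intro sum_nonneg) auto
  also have "\<dots> = (\<Sum>i\<in>I. w i * (u i)\<^sup>2) - 2 * m * (\<Sum>i\<in>I. w i * u i) + m\<^sup>2 * sum w I"
    by (simp add: power2_diff algebra_simps sum.distrib sum_subtractf sum_distrib_left
        sum_distrib_right)
  finally show ?thesis
    using assms(2) by (simp add: m_def power2_eq_square)
qed

lemma weighted_lipschitz_diff_square_le:
  fixes f :: "('i \<Rightarrow> real) \<Rightarrow> real"
  assumes "\<And>i. i \<in> I \<Longrightarrow> 0 \<le> w i" "sum w I = 1"
    and "\<bar>f x - f y\<bar> \<le> (\<Sum>i\<in>I. w i * \<bar>x i - y i\<bar>)"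
  shows "(f x - f y)\<^sup>2 \<le> (\<Sum>i\<in>I. w i * (x i - y i)\<^sup>2)"
proof -
  have "(f x - f y)\<^sup>2 \<le> (\<Sum>i\<in>I. w i * \<bar>x i - y i\<bar>)\<^sup>2"
    using assms(3) by (metis abs_ge_zero power2_abs power_mono)
  also have "\<dots> \<le> (\<Sum>i\<in>I. w i * \<bar>x i - y i\<bar>\<^sup>2)"
    by (rule square_weighted_sum_le[OF assms(1,2)])
  finally show ?thesis
    by simp
qed

definition exp_lip_majorant :: "real \<Rightarrow> real \<Rightarrow> real \<Rightarrow> real \<Rightarrow> real \<Rightarrow> real" where
  "exp_lip_majorant c K \<epsilon> x y =
     c\<^sup>2 * (x - y)^4 / (2 * \<epsilon>\<^sup>2) + 4 * c\<^sup>2 * \<epsilon>\<^sup>2 * (exp (4 * c * x) + exp (4 * c * y)) + K\<^sup>2 * (x - y)\<^sup>2"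

lemma exp_lip_majorant_nonneg: "0 \<le> \<epsilon> \<Longrightarrow> 0 \<le> exp_lip_majorant c K \<epsilon> x y"
  unfolding exp_lip_majorant_def
  by (intro add_nonneg_nonneg mult_nonneg_nonneg divide_nonneg_nonneg)
    (auto simp: zero_le_even_power)

lemma diff_square_le_exp_lip_majorant:
  fixes h :: "real \<Rightarrow> real"
  assumes h: "\<And>x y. h x - h y \<le> max \<bar>exp (c * x) - exp (c * y)\<bar> (K * \<bar>x - y\<bar>)"
    and "0 \<le> K" and "0 < \<epsilon>"
  shows "(h x - h y)\<^sup>2 \<le> exp_lip_majorant c K \<epsilon> x y"
proof -
  define S where "S = exp (c * x) + exp (c * y)"
  have "\<bar>h x - h y\<bar> \<le> max \<bar>exp (c * x) - exp (c * y)\<bar> (K * \<bar>x - y\<bar>)"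
    using h[of x y] h[of y x] unfolding abs_le_iff by (simp add: abs_minus_commute)
  then have "(h x - h y)\<^sup>2 \<le> (max \<bar>exp (c * x) - exp (c * y)\<bar> (K * \<bar>x - y\<bar>))\<^sup>2"
    by (metis abs_ge_zero power2_abs power_mono)
  also have "\<dots> \<le> (exp (c * x) - exp (c * y))\<^sup>2 + (K * \<bar>x - y\<bar>)\<^sup>2"
    by (simp add: max_def power2_abs)
  also have "(exp (c * x) - exp (c * y))\<^sup>2 \<le> (\<bar>c * x - c * y\<bar> * S)\<^sup>2"
    unfolding S_def by (metis abs_exp_diff_le abs_ge_zero power2_abs power_mono)
  also have "(\<bar>c * x - c * y\<bar> * S)\<^sup>2 = c\<^sup>2 * ((x - y)\<^sup>2 * S\<^sup>2)"
    by (simp add: power_mult_distrib power2_abs right_diff_distrib[symmetric])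
  also have "(x - y)\<^sup>2 * S\<^sup>2 \<le> (x - y)^4 / (2 * \<epsilon>\<^sup>2) + \<epsilon>\<^sup>2 * S^4 / 2"
  proof -
    have "d * S\<^sup>2 \<le> d\<^sup>2 / (2 * \<epsilon>\<^sup>2) + \<epsilon>\<^sup>2 * S^4 / 2" for d
      using sum_squares_bound[of "d / \<epsilon>" "\<epsilon> * S\<^sup>2"] \<open>0 < \<epsilon>\<close>
      by (simp add: field_simps power2_eq_square power4_eq_xxxx)
    from this[of "(x - y)\<^sup>2"] show ?thesis
      by (simp flip: power_mult)
  qed
  also have "S^4 \<le> 8 * (exp (4 * c * x) + exp (4 * c * y))"
    using power4_add_le[of "exp (c * x)" "exp (c * y)"]
    by (simp add: S_def exp_of_nat_mult[symmetric] mult_ac)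
  finally show ?thesis
    by (simp add: exp_lip_majorant_def mult_right_mono algebra_simps add_divide_distrib)
qed

lemma weighted_lipschitz_comp_diff_square_le:
  fixes f :: "('i \<Rightarrow> real) \<Rightarrow> real" and h :: "'i \<Rightarrow> real \<Rightarrow> real"
  assumes "\<And>i. i \<in> I \<Longrightarrow> 0 \<le> w i" "sum w I = 1"
    and "\<And>x y. \<bar>f x - f y\<bar> \<le> (\<Sum>i\<in>I. w i * \<bar>x i - y i\<bar>)"
    and "\<And>i x y. i \<in> I \<Longrightarrow> h i x - h i y \<le> max \<bar>exp (c * x) - exp (c * y)\<bar> (K * \<bar>x - y\<bar>)"
    and "0 \<le> K" "0 < \<epsilon>"
  shows "(f (\<lambda>i. h i (x i)) - f (\<lambda>i. h i (y i)))\<^sup>2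
    \<le> (\<Sum>i\<in>I. w i * exp_lip_majorant c K \<epsilon> (x i) (y i))"
proof -
  have "(f (\<lambda>i. h i (x i)) - f (\<lambda>i. h i (y i)))\<^sup>2 \<le> (\<Sum>i\<in>I. w i * (h i (x i) - h i (y i))\<^sup>2)"
    using assms(1-3) by (rule weighted_lipschitz_diff_square_le)
  also have "\<dots> \<le> (\<Sum>i\<in>I. w i * exp_lip_majorant c K \<epsilon> (x i) (y i))"
    using assms by (intro sum_mono mult_left_mono diff_square_le_exp_lip_majorant) auto
  finally show ?thesis .
qed

lemma nn_integral_add_le:
  fixes f g :: "'a \<Rightarrow> real" and F G :: real
  assumes "f \<in> borel_measurable M" "g \<in> borel_measurable M" "\<And>x. 0 \<le> f x" "\<And>x. 0 \<le> g x"
    and "(\<integral>\<^sup>+x. f x \<partial>M) \<le> F" "(\<integral>\<^sup>+x. g x \<partial>M) \<le> G" "0 \<le> F" "0 \<le> G"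
  shows "(\<integral>\<^sup>+x. f x + g x \<partial>M) \<le> F + G"
proof -
  have "(\<integral>\<^sup>+x. f x + g x \<partial>M) = (\<integral>\<^sup>+x. f x \<partial>M) + (\<integral>\<^sup>+x. g x \<partial>M)"
    using assms(1-4) by (simp add: ennreal_plus nn_integral_add)
  also have "\<dots> \<le> ennreal F + ennreal G"
    using assms(5,6) by (rule add_mono)
  finally show ?thesis
    using assms(7,8) by (simp add: ennreal_plus)
qed

lemma nn_integral_scale_le:
  fixes f :: "'a \<Rightarrow> real" and a F :: real
  assumes "f \<in> borel_measurable M" "\<And>x. 0 \<le> f x" "(\<integral>\<^sup>+x. f x \<partial>M) \<le> F" "0 \<le> a"
  shows "(\<integral>\<^sup>+x. a * f x \<partial>M) \<le> a * F"
proof -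
  have "(\<integral>\<^sup>+x. a * f x \<partial>M) = a * (\<integral>\<^sup>+x. f x \<partial>M)"
    using assms(1,2,4) by (simp add: ennreal_mult nn_integral_cmult)
  also have "\<dots> \<le> ennreal a * F"
    using assms(3) by (rule mult_left_mono) simp
  finally show ?thesis
    using assms(4) by (simp add: ennreal_mult')
qed

lemma nn_integral_convex_combination_le:
  fixes w :: "'i \<Rightarrow> real" and h :: "'i \<Rightarrow> 'a \<Rightarrow> real"
  assumes "finite I" "\<And>i. i \<in> I \<Longrightarrow> 0 \<le> w i" "sum w I = 1"
    and "\<And>i. i \<in> I \<Longrightarrow> h i \<in> borel_measurable M" "\<And>i x. i \<in> I \<Longrightarrow> 0 \<le> h i x"
    and "\<And>i. i \<in> I \<Longrightarrow> (\<integral>\<^sup>+x. h i x \<partial>M) \<le> c"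
  shows "(\<integral>\<^sup>+x. (\<Sum>i\<in>I. w i * h i x) \<partial>M) \<le> c"
proof -
  have "(\<integral>\<^sup>+x. (\<Sum>i\<in>I. w i * h i x) \<partial>M) = (\<integral>\<^sup>+x. (\<Sum>i\<in>I. ennreal (w i) * h i x) \<partial>M)"
    using assms(2,5) by (intro nn_integral_cong) (simp add: ennreal_mult sum_ennreal[symmetric])
  also have "\<dots> = (\<Sum>i\<in>I. ennreal (w i) * (\<integral>\<^sup>+x. h i x \<partial>M))"
    using assms(1,4) by (simp add: nn_integral_sum nn_integral_cmult)
  also have "\<dots> \<le> (\<Sum>i\<in>I. ennreal (w i) * c)"
    using assms(6) by (intro sum_mono mult_left_mono) auto
  also have "\<dots> = c"
    using assms(2,3) by (simp add: sum_ennreal flip: sum_distrib_right)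
  finally show ?thesis .
qed

lemma nn_integral_comp_le_of_AE_tendsto:
  fixes u :: "nat \<Rightarrow> 'a \<Rightarrow> real" and \<phi> :: "real \<Rightarrow> real"
  assumes u: "\<And>n. u n \<in> borel_measurable M" and \<phi>: "\<phi> \<in> borel_measurable borel"
    and "\<And>y. isCont \<phi> y"
    and "AE x in M. (\<lambda>n. u n x) \<longlonglongrightarrow> v x"
    and "eventually (\<lambda>n. (\<integral>\<^sup>+x. \<phi> (u n x) \<partial>M) \<le> c) sequentially"
  shows "(\<integral>\<^sup>+x. \<phi> (v x) \<partial>M) \<le> c"
proof -
  have "AE x in M. ennreal (\<phi> (v x)) = liminf (\<lambda>n. ennreal (\<phi> (u n x)))"
    using assms(4)
  proof eventually_elim
    case (elim x)
    then have "(\<lambda>n. ennreal (\<phi> (u n x))) \<longlonglongrightarrow> ennreal (\<phi> (v x))"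
      by (intro tendsto_ennrealI isCont_tendsto_compose[OF assms(3)])
    then show ?case
      by (simp add: lim_imp_Liminf)
  qed
  then have "(\<integral>\<^sup>+x. \<phi> (v x) \<partial>M) = (\<integral>\<^sup>+x. liminf (\<lambda>n. ennreal (\<phi> (u n x))) \<partial>M)"
    by (rule nn_integral_cong_AE)
  also have "\<dots> \<le> liminf (\<lambda>n. \<integral>\<^sup>+x. \<phi> (u n x) \<partial>M)"
    using u \<phi> by (intro nn_integral_liminf) (auto intro: measurable_compose[OF u \<phi>])
  also have "\<dots> \<le> c"
    by (rule Liminf_le[OF _ assms(5)]) simp
  finally show ?thesis .
qed

lemma integrable_mult_of_square_integrable:
  fixes u v :: "'a \<Rightarrow> real"
  assumes [measurable]: "u \<in> borel_measurable M" "v \<in> borel_measurable M"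
    and "integrable M (\<lambda>x. (u x)\<^sup>2)" "integrable M (\<lambda>x. (v x)\<^sup>2)"
  shows "integrable M (\<lambda>x. u x * v x)"
proof (rule Bochner_Integration.integrable_bound)
  show "integrable M (\<lambda>x. (u x)\<^sup>2 + (v x)\<^sup>2)"
    using assms(3,4) by auto
  have "\<bar>u x * v x\<bar> \<le> (u x)\<^sup>2 + (v x)\<^sup>2" for x
    using sum_squares_bound[of "\<bar>u x\<bar>" "\<bar>v x\<bar>"] abs_ge_zero[of "u x * v x"]
    unfolding abs_mult power2_abs by linarith
  then show "AE x in M. norm (u x * v x) \<le> norm ((u x)\<^sup>2 + (v x)\<^sup>2)"
    by simp
qed simp

lemma (in prob_space) integral_abs_le_of_integral_square_le:
  fixes u :: "'a \<Rightarrow> real"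
  assumes "integrable M u" "integrable M (\<lambda>x. (u x)\<^sup>2)" "(\<integral>x. (u x)\<^sup>2 \<partial>M) \<le> \<eta>\<^sup>2" "0 < \<eta>"
  shows "(\<integral>x. \<bar>u x\<bar> \<partial>M) \<le> \<eta>"
proof -
  have "\<bar>u x\<bar> \<le> \<eta> / 2 + (u x)\<^sup>2 / (2 * \<eta>)" for x
    using sum_squares_bound[of \<eta> "\<bar>u x\<bar>"] \<open>0 < \<eta>\<close>
    by (simp add: field_simps power2_abs power2_eq_square)
  then have "(\<integral>x. \<bar>u x\<bar> \<partial>M) \<le> (\<integral>x. \<eta> / 2 + (u x)\<^sup>2 / (2 * \<eta>) \<partial>M)"
    using assms(1,2) by (intro integral_mono) auto
  also have "\<dots> = \<eta> / 2 + (\<integral>x. (u x)\<^sup>2 \<partial>M) / (2 * \<eta>)"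
    using assms(2) by (simp add: prob_space)
  also have "\<dots> \<le> \<eta>"
    using assms(3,4) by (simp add: field_simps power2_eq_square)
  finally show ?thesis .
qed

lemma (in prob_space) mgf_weighted_sum_indep:
  fixes Z :: "'i \<Rightarrow> 'a \<Rightarrow> real"
  assumes "indep_vars (\<lambda>_. borel) Z I" "finite F" "F \<subseteq> I"
    and int: "\<And>k \<theta>. k \<in> F \<Longrightarrow> integrable M (\<lambda>x. exp (\<theta> * Z k x))"
    and mgf: "\<And>k \<theta>. k \<in> F \<Longrightarrow> (\<integral>x. exp (\<theta> * Z k x) \<partial>M) \<le> exp (\<theta>\<^sup>2 * s k / 2)"
  shows "integrable M (\<lambda>x. exp (\<theta> * (\<Sum>k\<in>F. a k * Z k x)))"
    and "(\<integral>x. exp (\<theta> * (\<Sum>k\<in>F. a k * Z k x)) \<partial>M) \<le> exp (\<theta>\<^sup>2 * (\<Sum>k\<in>F. (a k)\<^sup>2 * s k) / 2)"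
proof -
  define Y where "Y k x = exp ((\<theta> * a k) * x)" for k x
  have indep: "indep_vars (\<lambda>_. borel) (\<lambda>k x. Y k (Z k x)) F"
    by (rule indep_vars_compose2[OF indep_vars_subset[OF assms(1,3)]]) (auto simp: Y_def)
  have prod: "exp (\<theta> * (\<Sum>k\<in>F. a k * Z k x)) = (\<Prod>k\<in>F. Y k (Z k x))" for x
    unfolding Y_def sum_distrib_left exp_sum[OF \<open>finite F\<close>] by (simp add: mult_ac)
  have Y_int: "k \<in> F \<Longrightarrow> integrable M (\<lambda>x. Y k (Z k x))" for k
    unfolding Y_def by (rule int)
  show "integrable M (\<lambda>x. exp (\<theta> * (\<Sum>k\<in>F. a k * Z k x)))"
    unfolding prod using \<open>finite F\<close> indep Y_int by (rule indep_vars_integrable)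
  have "(\<integral>x. exp (\<theta> * (\<Sum>k\<in>F. a k * Z k x)) \<partial>M) = (\<Prod>k\<in>F. \<integral>x. Y k (Z k x) \<partial>M)"
    unfolding prod using \<open>finite F\<close> indep Y_int by (rule indep_vars_lebesgue_integral)
  also have "\<dots> \<le> (\<Prod>k\<in>F. exp ((\<theta> * a k)\<^sup>2 * s k / 2))"
    by (intro prod_mono conjI integral_nonneg_AE AE_I2) (auto simp: Y_def mgf)
  also have "\<dots> = exp (\<theta>\<^sup>2 * (\<Sum>k\<in>F. (a k)\<^sup>2 * s k) / 2)"
    unfolding exp_sum[OF \<open>finite F\<close>, symmetric]
    by (simp add: sum_distrib_left sum_divide_distrib power_mult_distrib mult_ac)
  finally show "(\<integral>x. exp (\<theta> * (\<Sum>k\<in>F. a k * Z k x)) \<partial>M) \<le> exp (\<theta>\<^sup>2 * (\<Sum>k\<in>F. (a k)\<^sup>2 * s k) / 2)" .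
qed

(* With theta = 1/sigma, Y^4 <= 24 sigma^4 (exp (theta Y) + exp (- theta Y)) and
   exp (theta^2 s / 2) <= exp (1/2) <= 7/4; hence 84 = 24 * 2 * 7/4. *)
lemma (in prob_space) nn_integral_power4_le_of_mgf:
  fixes Y :: "'a \<Rightarrow> real"
  assumes [measurable]: "Y \<in> borel_measurable M"
    and int: "\<And>\<theta>. integrable M (\<lambda>x. exp (\<theta> * Y x))"
    and mgf: "\<And>\<theta>. (\<integral>x. exp (\<theta> * Y x) \<partial>M) \<le> exp (\<theta>\<^sup>2 * s / 2)"
    and "s \<le> \<sigma>\<^sup>2" "0 < \<sigma>"
  shows "(\<integral>\<^sup>+x. (Y x)^4 \<partial>M) \<le> 84 * \<sigma>^4"
proof -
  define \<theta> where "\<theta> = 1 / \<sigma>"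
  have "\<theta>\<^sup>2 * s \<le> \<theta>\<^sup>2 * \<sigma>\<^sup>2"
    using \<open>s \<le> \<sigma>\<^sup>2\<close> by (intro mult_left_mono) auto
  also have "\<theta>\<^sup>2 * \<sigma>\<^sup>2 = 1"
    using \<open>0 < \<sigma>\<close> by (simp add: \<theta>_def power_divide)
  finally have "exp (\<theta>\<^sup>2 * s / 2) \<le> exp (1 / 2)"
    by simp
  also have "exp (1 / 2 :: real) \<le> 7 / 4"
    using exp_bound[of "1 / 2"] by (simp add: power2_eq_square)
  finally have mgf_\<theta>: "exp (\<theta>\<^sup>2 * s / 2) \<le> 7 / 4" .
  have "(Y x)^4 \<le> 24 * \<sigma>^4 * (exp (\<theta> * Y x) + exp ((- \<theta>) * Y x))" for x
  proof -
    have "(Y x)^4 = \<sigma>^4 * (\<theta> * Y x)^4"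
      using \<open>0 < \<sigma>\<close> by (simp add: \<theta>_def power_mult_distrib field_simps)
    also have "\<dots> \<le> \<sigma>^4 * (24 * (exp (\<theta> * Y x) + exp (- (\<theta> * Y x))))"
      by (intro mult_left_mono power4_le_exp_plus_exp_minus) simp
    finally show ?thesis
      by (simp add: algebra_simps)
  qed
  then have "(\<integral>\<^sup>+x. (Y x)^4 \<partial>M) \<le> (\<integral>\<^sup>+x. 24 * \<sigma>^4 * (exp (\<theta> * Y x) + exp ((- \<theta>) * Y x)) \<partial>M)"
    by (intro nn_integral_mono ennreal_leI)
  also have "\<dots> = 24 * \<sigma>^4 * ((\<integral>x. exp (\<theta> * Y x) \<partial>M) + (\<integral>x. exp ((- \<theta>) * Y x) \<partial>M))"
    using int[of \<theta>] int[of "- \<theta>"] by (subst nn_integral_eq_integral) auto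
  also have "\<dots> \<le> 24 * \<sigma>^4 * (7 / 4 + 7 / 4)"
    using mgf[of \<theta>] mgf[of "- \<theta>"] mgf_\<theta> by (intro ennreal_leI mult_left_mono add_mono) auto
  finally show ?thesis
    by simp
qed

definition unit_interval_measure :: "real measure" where
  "unit_interval_measure = restrict_space lborel {0..1}"

lemma space_unit_interval_measure [simp]: "space unit_interval_measure = {0..1}"
  by (simp add: unit_interval_measure_def space_restrict_space)

lemma finite_measure_unit_interval_measure: "finite_measure unit_interval_measure"
  by (rule finite_measureI)
    (simp add: unit_interval_measure_def emeasure_restrict_space space_restrict_space)

lemma set_lebesgue_integral_unit_interval:
  "(LINT t:{0..1}|lborel. f t) = (\<integral>t. f t \<partial>unit_interval_measure)" for f :: "real \<Rightarrow> real"
  by (simp add: unit_interval_measure_def set_lebesgue_integral_def integral_restrict_space)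

lemma set_integrable_unit_interval_iff:
  "set_integrable lborel {0..1} f \<longleftrightarrow> integrable unit_interval_measure f" for f :: "real \<Rightarrow> real"
  by (simp add: unit_interval_measure_def set_integrable_def integrable_restrict_space)

lemma borel_measurable_unit_interval_measure:
  "f \<in> borel_measurable lborel \<Longrightarrow> f \<in> borel_measurable unit_interval_measure"
  unfolding unit_interval_measure_def by (rule measurable_restrict_space1)

locale KL_expansion = prob_space M for M :: "'a measure" +
  fixes X :: "real \<Rightarrow> 'a \<Rightarrow> real" and e :: "nat \<Rightarrow> real \<Rightarrow> real" and lam :: "nat \<Rightarrow> real"
  assumes X_meas: "(\<lambda>(t,\<omega>). X t \<omega>) \<in> borel_measurable (restrict_space lborel {0..1} \<Otimes>\<^sub>M M)"
    and X_rv: "\<And>t. t \<in> {0..1} \<Longrightarrow> X t \<in> borel_measurable M"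
    and X_sq: "\<And>t. t \<in> {0..1} \<Longrightarrow> integrable M (\<lambda>\<omega>. (X t \<omega>)\<^sup>2)"
    and cov_cont: "continuous_on ({0..1} \<times> {0..1}) (\<lambda>(s,t). cov_kernel M X s t)"
    and e_meas: "\<And>k. e k \<in> borel_measurable lborel"
    and e_orth: "\<And>j k. set_integrable lborel {0..1} (\<lambda>t. e j t * e k t)
        \<and> (LINT t:{0..1}|lborel. e j t * e k t) = (if j = k then 1 else 0)"
    and e_eigen: "\<And>k t. t \<in> {0..1} \<Longrightarrow>
        (LINT s:{0..1}|lborel. cov_kernel M X s t * e k s) = lam k * e k t"
    and lam_nonneg: "\<And>k. lam k \<ge> 0"
    and KL_conv: "\<And>\<delta>. \<delta> > 0 \<Longrightarrow> \<exists>N. \<forall>L\<ge>N. \<forall>t\<in>{0..1}.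
        (\<integral>\<omega>. ((\<Sum>k<L. KL_coeff X e k \<omega> * e k t) - X t \<omega>)\<^sup>2 \<partial>M) \<le> \<delta>"
    and Z_indep: "indep_vars (\<lambda>_. borel) (KL_coeff X e) UNIV"
    and Z_subg: "\<And>k. subgaussian M (KL_coeff X e k) 0 (sqrt (lam k))"
begin

abbreviation Z :: "nat \<Rightarrow> 'a \<Rightarrow> real" where
  "Z \<equiv> KL_coeff X e"

abbreviation KL_sum :: "nat \<Rightarrow> real \<Rightarrow> 'a \<Rightarrow> real" where
  "KL_sum L t \<omega> \<equiv> \<Sum>k<L. Z k \<omega> * e k t"

lemma Z_measurable [measurable]: "Z k \<in> borel_measurable M"
  using Z_indep unfolding indep_vars_def by auto

lemma integrable_Z: "integrable M (Z k)"
  and integral_Z: "(\<integral>\<omega>. Z k \<omega> \<partial>M) = 0"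
  and integrable_exp_Z: "integrable M (\<lambda>\<omega>. exp (\<theta> * Z k \<omega>))"
  and integral_exp_Z_le: "(\<integral>\<omega>. exp (\<theta> * Z k \<omega>) \<partial>M) \<le> exp (\<theta>\<^sup>2 * lam k / 2)"
  using Z_subg[of k] lam_nonneg[of k] unfolding subgaussian_def by auto

lemma integrable_Z_square: "integrable M (\<lambda>\<omega>. (Z k \<omega>)\<^sup>2)"
proof (rule Bochner_Integration.integrable_bound)
  show "integrable M (\<lambda>\<omega>. 2 * (exp (1 * Z k \<omega>) + exp ((- 1) * Z k \<omega>)))"
    using integrable_exp_Z[of 1 k] integrable_exp_Z[of "- 1" k]
    by (intro integrable_mult_right Bochner_Integration.integrable_add)
  show "AE \<omega> in M. norm ((Z k \<omega>)\<^sup>2) \<le> norm (2 * (exp (1 * Z k \<omega>) + exp ((- 1) * Z k \<omega>)))"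
    using power2_le_exp_plus_exp_minus by (intro AE_I2) (simp add: add_nonneg_nonneg)
qed simp

lemma cov_kernel_bounded:
  obtains B where "0 \<le> B" "\<And>s t. s \<in> {0..1} \<Longrightarrow> t \<in> {0..1} \<Longrightarrow> \<bar>cov_kernel M X s t\<bar> \<le> B"
proof -
  have "compact ((\<lambda>(s,t). cov_kernel M X s t) ` ({0..1} \<times> {0..1}))"
    by (intro compact_continuous_image cov_cont compact_Times compact_Icc)
  then obtain B where B: "\<forall>z \<in> (\<lambda>(s,t). cov_kernel M X s t) ` ({0..1} \<times> {0..1}). norm z \<le> B"
    using compact_imp_bounded bounded_iff by metis
  show ?thesis
  proof
    show "0 \<le> B"
      using B[rule_format, of "cov_kernel M X 0 0"] by force
  qed (use B in force)
qed

lemma integral_X_square_eq: "(\<integral>\<omega>. (X t \<omega>)\<^sup>2 \<partial>M) = cov_kernel M X t t"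
  by (simp add: cov_kernel_def power2_eq_square)

lemma integrable_e: "integrable unit_interval_measure (e k)"
proof (rule finite_measure.square_integrable_imp_integrable[OF finite_measure_unit_interval_measure])
  show "e k \<in> borel_measurable unit_interval_measure"
    by (rule borel_measurable_unit_interval_measure[OF e_meas])
  show "integrable unit_interval_measure (\<lambda>t. (e k t)\<^sup>2)"
    using e_orth[of k k] by (simp add: power2_eq_square set_integrable_unit_interval_iff)
qed

lemma integrable_e_mult_X:
  assumes [measurable]: "W \<in> borel_measurable M" and W_sq: "integrable M (\<lambda>\<omega>. (W \<omega>)\<^sup>2)"
  shows "integrable (unit_interval_measure \<Otimes>\<^sub>M M) (\<lambda>(t, \<omega>). e k t * (W \<omega> * X t \<omega>))"
proof -
  obtain B where B: "0 \<le> B" "\<And>s t. s \<in> {0..1} \<Longrightarrow> t \<in> {0..1} \<Longrightarrow> \<bar>cov_kernel M X s t\<bar> \<le> B"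
    using cov_kernel_bounded by blast
  define c where "c = (B + (\<integral>\<omega>. (W \<omega>)\<^sup>2 \<partial>M)) / 2"
  have "0 \<le> c"
    using B(1) integral_nonneg_AE[of "\<lambda>\<omega>. (W \<omega>)\<^sup>2" M] by (simp add: c_def)
  define h where "h z = e k (fst z) * (W (snd z) * X (fst z) (snd z))" for z
  have [measurable]: "(\<lambda>z. X (fst z) (snd z)) \<in> borel_measurable (unit_interval_measure \<Otimes>\<^sub>M M)"
    and [measurable]: "e k \<in> borel_measurable unit_interval_measure"
    using X_meas borel_measurable_unit_interval_measure[OF e_meas]
    by (simp_all add: unit_interval_measure_def case_prod_beta')
  have h_meas [measurable]: "h \<in> borel_measurable (unit_interval_measure \<Otimes>\<^sub>M M)"
    unfolding h_def by measurable
  have inner: "(\<integral>\<^sup>+\<omega>. norm (h (t, \<omega>)) \<partial>M) \<le> \<bar>e k t\<bar> * c" if t: "t \<in> {0..1}" for t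
  proof -
    have "norm (h (t, \<omega>)) \<le> \<bar>e k t\<bar> * (((W \<omega>)\<^sup>2 + (X t \<omega>)\<^sup>2) / 2)" for \<omega>
    proof -
      have "2 * \<bar>W \<omega>\<bar> * \<bar>X t \<omega>\<bar> \<le> (W \<omega>)\<^sup>2 + (X t \<omega>)\<^sup>2"
        using sum_squares_bound[of "\<bar>W \<omega>\<bar>" "\<bar>X t \<omega>\<bar>"] by (simp add: power2_abs)
      then show ?thesis
        unfolding h_def real_norm_def abs_mult fst_conv snd_conv by (intro mult_left_mono) auto
    qed
    then have "(\<integral>\<^sup>+\<omega>. norm (h (t, \<omega>)) \<partial>M) \<le> (\<integral>\<^sup>+\<omega>. \<bar>e k t\<bar> * (((W \<omega>)\<^sup>2 + (X t \<omega>)\<^sup>2) / 2) \<partial>M)"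
      by (intro nn_integral_mono ennreal_leI)
    also have "\<dots> = \<bar>e k t\<bar> * (((\<integral>\<omega>. (W \<omega>)\<^sup>2 \<partial>M) + cov_kernel M X t t) / 2)"
      using W_sq X_sq[OF t] X_rv[OF t]
      by (subst nn_integral_eq_integral) (auto simp: integral_X_square_eq)
    also have "\<dots> \<le> \<bar>e k t\<bar> * c"
      using B(2)[OF t t] by (intro ennreal_leI mult_left_mono) (auto simp: c_def)
    finally show ?thesis .
  qed
  have "integrable (unit_interval_measure \<Otimes>\<^sub>M M) h"
    unfolding integrable_iff_bounded
  proof
    have "(\<integral>\<^sup>+z. norm (h z) \<partial>(unit_interval_measure \<Otimes>\<^sub>M M))
        = (\<integral>\<^sup>+t. \<integral>\<^sup>+\<omega>. norm (h (t, \<omega>)) \<partial>M \<partial>unit_interval_measure)"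
      by (rule nn_integral_fst[symmetric]) measurable
    also have "\<dots> \<le> (\<integral>\<^sup>+t. \<bar>e k t\<bar> * c \<partial>unit_interval_measure)"
      using inner by (intro nn_integral_mono) auto
    also have "\<dots> < \<infinity>"
      using integrable_e \<open>0 \<le> c\<close> by (subst nn_integral_eq_integral) auto
    finally show "(\<integral>\<^sup>+z. norm (h z) \<partial>(unit_interval_measure \<Otimes>\<^sub>M M)) < \<infinity>" .
  qed (rule h_meas)
  then show ?thesis
    by (simp add: h_def[abs_def] case_prod_beta')
qed

lemma integral_mult_Z:
  assumes "W \<in> borel_measurable M" and "integrable M (\<lambda>\<omega>. (W \<omega>)\<^sup>2)"
  shows "(\<integral>\<omega>. W \<omega> * Z k \<omega> \<partial>M) = (\<integral>t. e k t * (\<integral>\<omega>. W \<omega> * X t \<omega> \<partial>M) \<partial>unit_interval_measure)"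
proof -
  interpret U: finite_measure unit_interval_measure
    by (rule finite_measure_unit_interval_measure)
  interpret P: pair_sigma_finite unit_interval_measure M ..
  have "(\<integral>\<omega>. \<integral>t. e k t * (W \<omega> * X t \<omega>) \<partial>unit_interval_measure \<partial>M)
      = (\<integral>t. \<integral>\<omega>. e k t * (W \<omega> * X t \<omega>) \<partial>M \<partial>unit_interval_measure)"
    using assms by (intro P.Fubini_integral integrable_e_mult_X)
  moreover have "(\<integral>t. e k t * (W \<omega> * X t \<omega>) \<partial>unit_interval_measure) = W \<omega> * Z k \<omega>" for \<omega>
    by (simp add: KL_coeff_def set_lebesgue_integral_unit_interval mult.left_commute mult.commute)
  ultimately show ?thesis
    by simp
qed

lemma integrable_Z_mult_X: "t \<in> {0..1} \<Longrightarrow> integrable M (\<lambda>\<omega>. Z k \<omega> * X t \<omega>)"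
  by (intro integrable_mult_of_square_integrable X_rv X_sq integrable_Z_square Z_measurable)

lemma integrable_Z_mult_Z: "integrable M (\<lambda>\<omega>. Z j \<omega> * Z k \<omega>)"
  by (intro integrable_mult_of_square_integrable integrable_Z_square Z_measurable)

lemma integral_Z_mult_X:
  assumes t: "t \<in> {0..1}"
  shows "(\<integral>\<omega>. Z k \<omega> * X t \<omega> \<partial>M) = lam k * e k t"
proof -
  have "(\<integral>\<omega>. Z k \<omega> * X t \<omega> \<partial>M) = (\<integral>\<omega>. X t \<omega> * Z k \<omega> \<partial>M)"
    by (simp add: mult.commute)
  also have "\<dots> = (\<integral>s. e k s * (\<integral>\<omega>. X t \<omega> * X s \<omega> \<partial>M) \<partial>unit_interval_measure)"
    using X_rv[OF t] X_sq[OF t] by (rule integral_mult_Z)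
  also have "\<dots> = (LINT s:{0..1}|lborel. cov_kernel M X s t * e k s)"
    by (simp add: set_lebesgue_integral_unit_interval cov_kernel_def mult_ac)
  finally show ?thesis
    using e_eigen[OF t] by simp
qed

lemma integral_Z_mult_Z: "(\<integral>\<omega>. Z j \<omega> * Z k \<omega> \<partial>M) = (if j = k then lam k else 0)"
proof (cases "j = k")
  case True
  have "(\<integral>\<omega>. Z k \<omega> * Z k \<omega> \<partial>M) = (\<integral>t. e k t * (\<integral>\<omega>. Z k \<omega> * X t \<omega> \<partial>M) \<partial>unit_interval_measure)"
    using Z_measurable integrable_Z_square by (rule integral_mult_Z)
  also have "\<dots> = (\<integral>t. lam k * (e k t * e k t) \<partial>unit_interval_measure)"
    by (intro Bochner_Integration.integral_cong) (auto simp: integral_Z_mult_X)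
  also have "\<dots> = lam k"
    using e_orth[of k k] by (simp add: set_lebesgue_integral_unit_interval)
  finally show ?thesis
    using True by simp
next
  case False
  have "indep_vars (\<lambda>_. borel) Z {j, k}"
    by (rule indep_vars_subset[OF Z_indep]) auto
  then have "(\<integral>\<omega>. (\<Prod>i\<in>{j, k}. Z i \<omega>) \<partial>M) = (\<Prod>i\<in>{j, k}. \<integral>\<omega>. Z i \<omega> \<partial>M)"
    by (intro indep_vars_lebesgue_integral) (auto intro: integrable_Z)
  then show ?thesis
    using False by (simp add: integral_Z)
qed

lemma KL_sum_sub_X_square_eq:
  "(KL_sum L t \<omega> - X t \<omega>)\<^sup>2 = (\<Sum>j<L. \<Sum>k<L. e j t * e k t * (Z j \<omega> * Z k \<omega>))
     - 2 * (\<Sum>k<L. e k t * (Z k \<omega> * X t \<omega>)) + X t \<omega> * X t \<omega>"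
proof -
  have "(a - b)\<^sup>2 = a * a - 2 * (a * b) + b * b" for a b :: real
    by (simp add: power2_eq_square algebra_simps)
  moreover have "KL_sum L t \<omega> * KL_sum L t \<omega> = (\<Sum>j<L. \<Sum>k<L. e j t * e k t * (Z j \<omega> * Z k \<omega>))"
    unfolding sum_product by (simp add: mult_ac)
  moreover have "KL_sum L t \<omega> * X t \<omega> = (\<Sum>k<L. e k t * (Z k \<omega> * X t \<omega>))"
    unfolding sum_distrib_right by (simp add: mult_ac)
  ultimately show ?thesis
    by (simp only:)
qed

lemma integrable_KL_sum_sub_X_square:
  assumes t: "t \<in> {0..1}"
  shows "integrable M (\<lambda>\<omega>. (KL_sum L t \<omega> - X t \<omega>)\<^sup>2)"
  unfolding KL_sum_sub_X_square_eq using X_sq[OF t]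
  by (intro Bochner_Integration.integrable_add Bochner_Integration.integrable_diff
      Bochner_Integration.integrable_sum integrable_mult_right integrable_Z_mult_Z
      integrable_Z_mult_X[OF t]) (simp add: power2_eq_square)

lemma integral_KL_sum_sub_X_square:
  assumes t: "t \<in> {0..1}"
  shows "(\<integral>\<omega>. (KL_sum L t \<omega> - X t \<omega>)\<^sup>2 \<partial>M) = cov_kernel M X t t - (\<Sum>k<L. lam k * (e k t)\<^sup>2)"
proof -
  have XX: "integrable M (\<lambda>\<omega>. X t \<omega> * X t \<omega>)"
    using X_sq[OF t] by (simp add: power2_eq_square)
  have "(\<integral>\<omega>. (KL_sum L t \<omega> - X t \<omega>)\<^sup>2 \<partial>M)
      = (\<Sum>j<L. \<Sum>k<L. e j t * e k t * (\<integral>\<omega>. Z j \<omega> * Z k \<omega> \<partial>M))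
        - 2 * (\<Sum>k<L. e k t * (\<integral>\<omega>. Z k \<omega> * X t \<omega> \<partial>M)) + (\<integral>\<omega>. X t \<omega> * X t \<omega> \<partial>M)"
    unfolding KL_sum_sub_X_square_eq using XX
    by (simp add: integrable_Z_mult_Z integrable_Z_mult_X[OF t])
  also have "\<dots> = cov_kernel M X t t - (\<Sum>k<L. lam k * (e k t)\<^sup>2)"
    unfolding integral_Z_mult_Z integral_Z_mult_X[OF t]
    by (simp add: cov_kernel_def if_distrib power2_eq_square mult_ac)
  finally show ?thesis .
qed

lemma sum_lam_e_square_le_cov:
  assumes "t \<in> {0..1}"
  shows "(\<Sum>k<L. lam k * (e k t)\<^sup>2) \<le> cov_kernel M X t t"
proof -
  have "0 \<le> (\<integral>\<omega>. (KL_sum L t \<omega> - X t \<omega>)\<^sup>2 \<partial>M)"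
    by (intro integral_nonneg_AE AE_I2) simp
  then show ?thesis
    using integral_KL_sum_sub_X_square[OF assms, of L] by linarith
qed

lemma sum_lam_e_square_tail_le:
  assumes "t \<in> {0..1}" "L \<le> N"
  shows "(\<Sum>k\<in>{L..<N}. lam k * (e k t)\<^sup>2) \<le> (\<integral>\<omega>. (KL_sum L t \<omega> - X t \<omega>)\<^sup>2 \<partial>M)"
proof -
  have "(\<Sum>k<N. lam k * (e k t)\<^sup>2) = (\<Sum>k<L. lam k * (e k t)\<^sup>2) + (\<Sum>k\<in>{L..<N}. lam k * (e k t)\<^sup>2)"
    using sum.atLeastLessThan_concat[of 0 L N "\<lambda>k. lam k * (e k t)\<^sup>2"] \<open>L \<le> N\<close>
    by (simp add: atLeast0LessThan)
  then show ?thesis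
    using sum_lam_e_square_le_cov[OF assms(1), of N] integral_KL_sum_sub_X_square[OF assms(1), of L]
    by linarith
qed

lemma KL_trunc_error_le:
  assumes "0 < \<epsilon>" "t \<in> {0..1}"
  shows "(\<integral>\<omega>. (KL_sum (KL_trunc M X e \<epsilon>) t \<omega> - X t \<omega>)\<^sup>2 \<partial>M) \<le> \<epsilon>\<^sup>2"
proof -
  define P where "P L \<longleftrightarrow> (\<forall>t\<in>{0..1}. (\<integral>\<omega>. (KL_sum L t \<omega> - X t \<omega>)\<^sup>2 \<partial>M) \<le> \<epsilon>\<^sup>2)" for L
  obtain N where "P N"
    using KL_conv[of "\<epsilon>\<^sup>2"] assms(1) by (auto simp: P_def)
  then have "P (KL_trunc M X e \<epsilon>)"
    unfolding KL_trunc_def P_def[symmetric] by (rule LeastI)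
  with assms(2) show ?thesis
    by (simp add: P_def)
qed

lemma nn_integral_exp_KL_sum_le:
  assumes t: "t \<in> {0..1}" and B: "cov_kernel M X t t \<le> B"
  shows "(\<integral>\<^sup>+\<omega>. exp (\<theta> * KL_sum N t \<omega>) \<partial>M) \<le> exp (\<theta>\<^sup>2 * B / 2)"
proof -
  note mgf = mgf_weighted_sum_indep[OF Z_indep finite_lessThan subset_UNIV integrable_exp_Z
      integral_exp_Z_le, where a = "\<lambda>k. e k t"]
  have "(\<integral>\<^sup>+\<omega>. exp (\<theta> * KL_sum N t \<omega>) \<partial>M) = (\<integral>\<omega>. exp (\<theta> * (\<Sum>k<N. e k t * Z k \<omega>)) \<partial>M)"
    using mgf(1) by (subst nn_integral_eq_integral) (simp_all add: mult.commute)
  also have "\<dots> \<le> exp (\<theta>\<^sup>2 * (\<Sum>k<N. (e k t)\<^sup>2 * lam k) / 2)"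
    using mgf(2) by (rule ennreal_leI)
  also have "\<dots> \<le> exp (\<theta>\<^sup>2 * B / 2)"
  proof -
    have "(\<Sum>k<N. (e k t)\<^sup>2 * lam k) \<le> B"
      using sum_lam_e_square_le_cov[OF t, of N] B by (simp add: mult.commute)
    then show ?thesis
      by (intro ennreal_leI) (simp add: mult_left_mono)
  qed
  finally show ?thesis .
qed

lemma KL_sum_AE_subseq_tendsto:
  assumes t: "t \<in> {0..1}"
  obtains r where "strict_mono r" "AE \<omega> in M. (\<lambda>n. KL_sum (r n) t \<omega>) \<longlonglongrightarrow> X t \<omega>"
proof -
  define u where "u n \<omega> = KL_sum n t \<omega> - X t \<omega>" for n \<omega>
  have u_sq: "integrable M (\<lambda>\<omega>. (u n \<omega>)\<^sup>2)" for n
    unfolding u_def by (rule integrable_KL_sum_sub_X_square[OF t])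
  have u_int: "integrable M (u n)" for n
  proof (rule square_integrable_imp_integrable[OF _ u_sq])
    show "u n \<in> borel_measurable M"
      using X_rv[OF t] unfolding u_def by measurable
  qed
  have "(\<lambda>n. \<integral>\<omega>. norm (u n \<omega>) \<partial>M) \<longlonglongrightarrow> 0"
  proof (rule LIMSEQ_I)
    fix r :: real
    assume "0 < r"
    then have "0 < (r / 2)\<^sup>2"
      by simp
    then obtain N where N: "\<forall>L\<ge>N. \<forall>t\<in>{0..1}. (\<integral>\<omega>. (KL_sum L t \<omega> - X t \<omega>)\<^sup>2 \<partial>M) \<le> (r / 2)\<^sup>2"
      using KL_conv by blast
    have "norm ((\<integral>\<omega>. norm (u n \<omega>) \<partial>M) - 0) < r" if "N \<le> n" for n
    proof -
      have "(\<integral>\<omega>. \<bar>u n \<omega>\<bar> \<partial>M) \<le> r / 2"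
      proof (rule integral_abs_le_of_integral_square_le[OF u_int u_sq])
        show "(\<integral>\<omega>. (u n \<omega>)\<^sup>2 \<partial>M) \<le> (r / 2)\<^sup>2"
          using N that t unfolding u_def by blast
      qed (use \<open>0 < r\<close> in simp)
      moreover have "0 \<le> (\<integral>\<omega>. \<bar>u n \<omega>\<bar> \<partial>M)"
        by (intro integral_nonneg_AE AE_I2) simp
      ultimately show ?thesis
        using \<open>0 < r\<close> by simp
    qed
    then show "\<exists>N. \<forall>n\<ge>N. norm ((\<integral>\<omega>. norm (u n \<omega>) \<partial>M) - 0) < r"
      by blast
  qed
  then obtain r where "strict_mono r" "AE \<omega> in M. (\<lambda>n. u (r n) \<omega>) \<longlonglongrightarrow> 0"
    using tendsto_L1_AE_subseq[where u = u, OF u_int] by blast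
  moreover from this(2) have "AE \<omega> in M. (\<lambda>n. KL_sum (r n) t \<omega>) \<longlonglongrightarrow> X t \<omega>"
    by eventually_elim (simp add: u_def LIM_zero_iff)
  ultimately show ?thesis
    using that by blast
qed

lemma nn_integral_exp_X_le:
  assumes t: "t \<in> {0..1}" and B: "cov_kernel M X t t \<le> B"
  shows "(\<integral>\<^sup>+\<omega>. exp (\<theta> * X t \<omega>) \<partial>M) \<le> exp (\<theta>\<^sup>2 * B / 2)"
proof -
  obtain r where "AE \<omega> in M. (\<lambda>n. KL_sum (r n) t \<omega>) \<longlonglongrightarrow> X t \<omega>"
    using KL_sum_AE_subseq_tendsto[OF t] by blast
  then show ?thesis
    using nn_integral_exp_KL_sum_le[OF t B]
    by (intro nn_integral_comp_le_of_AE_tendsto[where \<phi> = "\<lambda>x. exp (\<theta> * x)"]) auto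
qed

lemma nn_integral_KL_error_power4_le:
  assumes t: "t \<in> {0..1}" and "0 < \<epsilon>"
    and err: "(\<integral>\<omega>. (KL_sum L t \<omega> - X t \<omega>)\<^sup>2 \<partial>M) \<le> \<epsilon>\<^sup>2"
  shows "(\<integral>\<^sup>+\<omega>. (X t \<omega> - KL_sum L t \<omega>)^4 \<partial>M) \<le> 84 * \<epsilon>^4"
proof -
  obtain r where r: "strict_mono r" "AE \<omega> in M. (\<lambda>n. KL_sum (r n) t \<omega>) \<longlonglongrightarrow> X t \<omega>"
    using KL_sum_AE_subseq_tendsto[OF t] by blast
  have tail: "KL_sum N t \<omega> - KL_sum L t \<omega> = (\<Sum>k\<in>{L..<N}. e k t * Z k \<omega>)" if "L \<le> N" for N \<omega>
    using sum.atLeastLessThan_concat[of 0 L N "\<lambda>k. Z k \<omega> * e k t"] that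
    by (simp add: atLeast0LessThan mult.commute)
  have "(\<integral>\<^sup>+\<omega>. (KL_sum N t \<omega> - KL_sum L t \<omega>)^4 \<partial>M) \<le> 84 * \<epsilon>^4" if "L \<le> N" for N
  proof -
    note mgf = mgf_weighted_sum_indep[OF Z_indep finite_atLeastLessThan subset_UNIV
        integrable_exp_Z integral_exp_Z_le, where a = "\<lambda>k. e k t"]
    have "(\<Sum>k\<in>{L..<N}. (e k t)\<^sup>2 * lam k) \<le> \<epsilon>\<^sup>2"
      using sum_lam_e_square_tail_le[OF t that] err by (simp add: mult.commute)
    then show ?thesis
      unfolding tail[OF that] using \<open>0 < \<epsilon>\<close> mgf by (intro nn_integral_power4_le_of_mgf) auto
  qed
  moreover have "eventually (\<lambda>n. L \<le> r n) sequentially"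
    using filterlim_subseq[OF r(1)] by (simp add: filterlim_at_top)
  ultimately have "eventually (\<lambda>n. (\<integral>\<^sup>+\<omega>. (KL_sum (r n) t \<omega> - KL_sum L t \<omega>)^4 \<partial>M) \<le> 84 * \<epsilon>^4)
      sequentially"
    by (auto elim: eventually_mono)
  moreover have
    "AE \<omega> in M. (\<lambda>n. KL_sum (r n) t \<omega> - KL_sum L t \<omega>) \<longlonglongrightarrow> X t \<omega> - KL_sum L t \<omega>"
    using r(2) by eventually_elim (intro tendsto_diff tendsto_const)
  ultimately show ?thesis
    by (intro nn_integral_comp_le_of_AE_tendsto[where \<phi> = "\<lambda>x. x^4"]) auto
qed

lemma nn_integral_exp_lip_majorant_le:
  assumes t: "t \<in> {0..1}" and "0 < \<epsilon>" and "0 \<le> K"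
    and err: "(\<integral>\<omega>. (KL_sum L t \<omega> - X t \<omega>)\<^sup>2 \<partial>M) \<le> \<epsilon>\<^sup>2"
    and B: "cov_kernel M X t t \<le> B"
  shows "(\<integral>\<^sup>+\<omega>. exp_lip_majorant c K \<epsilon> (X t \<omega>) (KL_sum L t \<omega>) \<partial>M)
    \<le> \<epsilon>\<^sup>2 * (42 * c\<^sup>2 + 8 * c\<^sup>2 * exp (8 * c\<^sup>2 * B) + K\<^sup>2)"
proof -
  define D where "D \<omega> = X t \<omega> - KL_sum L t \<omega>" for \<omega>
  have [measurable]: "X t \<in> borel_measurable M"
    by (rule X_rv[OF t])
  have "(4 * c)\<^sup>2 * B / 2 = 8 * c\<^sup>2 * B"
    by (simp add: power_mult_distrib)
  then have exp_X: "(\<integral>\<^sup>+\<omega>. exp (4 * c * X t \<omega>) \<partial>M) \<le> exp (8 * c\<^sup>2 * B)"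
    and exp_KL_sum: "(\<integral>\<^sup>+\<omega>. exp (4 * c * KL_sum L t \<omega>) \<partial>M) \<le> exp (8 * c\<^sup>2 * B)"
    using nn_integral_exp_X_le[OF t B, of "4 * c"] nn_integral_exp_KL_sum_le[OF t B, of "4 * c" L]
    by (simp_all add: mult_ac)
  have square: "(\<integral>\<^sup>+\<omega>. (D \<omega>)\<^sup>2 \<partial>M) \<le> \<epsilon>\<^sup>2"
  proof -
    have "(\<integral>\<^sup>+\<omega>. (D \<omega>)\<^sup>2 \<partial>M) = (\<integral>\<omega>. (KL_sum L t \<omega> - X t \<omega>)\<^sup>2 \<partial>M)"
      using integrable_KL_sum_sub_X_square[OF t]
      by (subst nn_integral_eq_integral) (simp_all add: D_def power2_commute)
    then show ?thesis
      using err by (simp add: ennreal_leI)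
  qed
  have fourth: "(\<integral>\<^sup>+\<omega>. (D \<omega>)^4 \<partial>M) \<le> 84 * \<epsilon>^4"
    unfolding D_def by (rule nn_integral_KL_error_power4_le[OF t \<open>0 < \<epsilon>\<close> err])
  have "(\<integral>\<^sup>+\<omega>. c\<^sup>2 / (2 * \<epsilon>\<^sup>2) * (D \<omega>)^4
        + 4 * c\<^sup>2 * \<epsilon>\<^sup>2 * (exp (4 * c * X t \<omega>) + exp (4 * c * KL_sum L t \<omega>)) + K\<^sup>2 * (D \<omega>)\<^sup>2 \<partial>M)
      \<le> c\<^sup>2 / (2 * \<epsilon>\<^sup>2) * (84 * \<epsilon>^4)
        + 4 * c\<^sup>2 * \<epsilon>\<^sup>2 * (exp (8 * c\<^sup>2 * B) + exp (8 * c\<^sup>2 * B)) + K\<^sup>2 * \<epsilon>\<^sup>2"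
    by (intro nn_integral_add_le nn_integral_scale_le fourth exp_X exp_KL_sum square)
      (simp_all add: D_def zero_le_even_power)
  also have "\<dots> = \<epsilon>\<^sup>2 * (42 * c\<^sup>2 + 8 * c\<^sup>2 * exp (8 * c\<^sup>2 * B) + K\<^sup>2)"
    using \<open>0 < \<epsilon>\<close> by (simp add: field_simps power2_eq_square power4_eq_xxxx)
  finally show ?thesis
    by (simp add: exp_lip_majorant_def D_def mult.assoc)
qed

lemma nn_integral_weighted_exp_lip_majorant_le:
  fixes w :: "'i \<Rightarrow> real" and ts :: "'i \<Rightarrow> real"
  assumes "finite I" "\<And>i. i \<in> I \<Longrightarrow> 0 \<le> w i" "sum w I = 1" "\<And>i. i \<in> I \<Longrightarrow> ts i \<in> {0..1}"
    and "0 < \<epsilon>" "0 \<le> K"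
    and err: "\<And>t. t \<in> {0..1} \<Longrightarrow> (\<integral>\<omega>. (KL_sum L t \<omega> - X t \<omega>)\<^sup>2 \<partial>M) \<le> \<epsilon>\<^sup>2"
    and B: "\<And>t. t \<in> {0..1} \<Longrightarrow> cov_kernel M X t t \<le> B"
  shows "(\<integral>\<^sup>+\<omega>. (\<Sum>i\<in>I. w i * exp_lip_majorant c K \<epsilon> (X (ts i) \<omega>) (KL_sum L (ts i) \<omega>)) \<partial>M)
    \<le> \<epsilon>\<^sup>2 * (42 * c\<^sup>2 + 8 * c\<^sup>2 * exp (8 * c\<^sup>2 * B) + K\<^sup>2)"
proof (rule nn_integral_convex_combination_le)
  fix i
  assume "i \<in> I"
  then have t: "ts i \<in> {0..1}"
    using assms(4) by simp
  show "(\<integral>\<^sup>+\<omega>. exp_lip_majorant c K \<epsilon> (X (ts i) \<omega>) (KL_sum L (ts i) \<omega>) \<partial>M)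
      \<le> \<epsilon>\<^sup>2 * (42 * c\<^sup>2 + 8 * c\<^sup>2 * exp (8 * c\<^sup>2 * B) + K\<^sup>2)"
    using t \<open>0 < \<epsilon>\<close> \<open>0 \<le> K\<close> err[OF t] B[OF t] by (rule nn_integral_exp_lip_majorant_le)
  show "(\<lambda>\<omega>. exp_lip_majorant c K \<epsilon> (X (ts i) \<omega>) (KL_sum L (ts i) \<omega>)) \<in> borel_measurable M"
    unfolding exp_lip_majorant_def using X_rv[OF t] by measurable
qed (use assms(1-3,5) in \<open>auto simp: exp_lip_majorant_nonneg\<close>)

end

theorem theorem6:
  fixes M :: "'a measure" and X :: "real \<Rightarrow> 'a \<Rightarrow> real"
    and e :: "nat \<Rightarrow> real \<Rightarrow> real" and lam :: "nat \<Rightarrow> real"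
    and g :: "real \<Rightarrow> real \<Rightarrow> real" and c\<^sub>g K\<^sub>g :: real
  assumes M: "prob_space M"
    and X_meas: "(\<lambda>(t,\<omega>). X t \<omega>) \<in> borel_measurable (restrict_space lborel {0..1} \<Otimes>\<^sub>M M)"
    and X_rv: "\<And>t. t \<in> {0..1} \<Longrightarrow> X t \<in> borel_measurable M"
    and X_int: "\<And>t. t \<in> {0..1} \<Longrightarrow> integrable M (X t)"
    and X_centered: "\<And>t. t \<in> {0..1} \<Longrightarrow> (\<integral>\<omega>. X t \<omega> \<partial>M) = 0"
    and X_sq: "\<And>t. t \<in> {0..1} \<Longrightarrow> integrable M (\<lambda>\<omega>. (X t \<omega>)\<^sup>2)"
    and cov_cont: "continuous_on ({0..1} \<times> {0..1}) (\<lambda>(s,t). cov_kernel M X s t)"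
    and e_meas: "\<And>k. e k \<in> borel_measurable lborel"
    and e_orth: "\<And>j k. set_integrable lborel {0..1} (\<lambda>t. e j t * e k t)
        \<and> (LINT t:{0..1}|lborel. e j t * e k t) = (if j = k then 1 else 0)"
    and e_eigen: "\<And>k t. t \<in> {0..1} \<Longrightarrow>
        (LINT s:{0..1}|lborel. cov_kernel M X s t * e k s) = lam k * e k t"
    and lam_nonneg: "\<And>k. lam k \<ge> 0"
    and lam_decr: "decseq lam"
    and KL_conv: "\<And>\<delta>. \<delta> > 0 \<Longrightarrow> \<exists>N. \<forall>L\<ge>N. \<forall>t\<in>{0..1}.
        (\<integral>\<omega>. ((\<Sum>k<L. KL_coeff X e k \<omega> * e k t) - X t \<omega>)\<^sup>2 \<partial>M) \<le> \<delta>"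
    and Z_indep: "prob_space.indep_vars M (\<lambda>_. borel) (KL_coeff X e) UNIV"
    and Z_subg: "\<And>k. subgaussian M (KL_coeff X e k) 0 (sqrt (lam k))"
    and K\<^sub>g_nonneg: "K\<^sub>g \<ge> 0"
    and g_cond: "\<And>t x y. t \<in> {0..1} \<Longrightarrow>
        g t x - g t y \<le> max \<bar>exp (c\<^sub>g * x) - exp (c\<^sub>g * y)\<bar> (K\<^sub>g * \<bar>x - y\<bar>)"
  shows "\<exists>C::real. \<forall>(T::nat) (ts::nat \<Rightarrow> real) (w::nat \<Rightarrow> real) (f::(nat \<Rightarrow> real) \<Rightarrow> real) (\<epsilon>::real).
     T \<ge> 1 \<longrightarrow> (\<forall>i<T. ts i \<in> {0..1}) \<longrightarrow> (\<forall>i<T. w i \<ge> 0) \<longrightarrow> (\<Sum>i<T. w i) = 1 \<longrightarrow>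
     (\<forall>x y. \<bar>f x - f y\<bar> \<le> (\<Sum>i<T. w i * \<bar>x i - y i\<bar>)) \<longrightarrow>
     0 < \<epsilon> \<longrightarrow> \<epsilon> \<le> 1 \<longrightarrow>
     (\<integral>\<^sup>+\<omega>. ennreal ((f (\<lambda>i. g (ts i) (X (ts i) \<omega>))
          - f (\<lambda>i. g (ts i) (\<Sum>k<KL_trunc M X e \<epsilon>. KL_coeff X e k \<omega> * e k (ts i))))\<^sup>2) \<partial>M)
       \<le> ennreal (C * \<epsilon>\<^sup>2)"
proof -
  interpret KL_expansion M X e lam
    using M X_meas X_rv X_sq cov_cont e_meas e_orth e_eigen lam_nonneg KL_conv Z_indep Z_subg
    by (simp add: KL_expansion_def KL_expansion_axioms_def)
  obtain B where B: "\<And>t. t \<in> {0..1} \<Longrightarrow> cov_kernel M X t t \<le> B"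
    using cov_kernel_bounded by (metis abs_le_D1)
  define C where "C = 42 * c\<^sub>g\<^sup>2 + 8 * c\<^sub>g\<^sup>2 * exp (8 * c\<^sub>g\<^sup>2 * B) + K\<^sub>g\<^sup>2"
  show ?thesis
  proof (intro exI[of _ C] allI impI)
    fix T :: nat and ts w :: "nat \<Rightarrow> real" and f :: "(nat \<Rightarrow> real) \<Rightarrow> real" and \<epsilon> :: real
    assume "1 \<le> T" and ts: "\<forall>i<T. ts i \<in> {0..1}" and w: "\<forall>i<T. 0 \<le> w i" "(\<Sum>i<T. w i) = 1"
      and f: "\<forall>x y. \<bar>f x - f y\<bar> \<le> (\<Sum>i<T. w i * \<bar>x i - y i\<bar>)" and "0 < \<epsilon>" and "\<epsilon> \<le> 1"
    define L where "L = KL_trunc M X e \<epsilon>"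
    have "(\<integral>\<^sup>+\<omega>. (f (\<lambda>i. g (ts i) (X (ts i) \<omega>)) - f (\<lambda>i. g (ts i) (KL_sum L (ts i) \<omega>)))\<^sup>2 \<partial>M)
        \<le> (\<integral>\<^sup>+\<omega>. (\<Sum>i<T. w i * exp_lip_majorant c\<^sub>g K\<^sub>g \<epsilon> (X (ts i) \<omega>) (KL_sum L (ts i) \<omega>)) \<partial>M)"
      using w f ts g_cond K\<^sub>g_nonneg \<open>0 < \<epsilon>\<close>
      by (intro nn_integral_mono ennreal_leI weighted_lipschitz_comp_diff_square_le) auto
    also have "\<dots> \<le> C * \<epsilon>\<^sup>2"
      using w ts \<open>0 < \<epsilon>\<close> K\<^sub>g_nonneg KL_trunc_error_le[OF \<open>0 < \<epsilon>\<close>] B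
      unfolding C_def L_def
      by (subst mult.commute, intro ennreal_leI nn_integral_weighted_exp_lip_majorant_le) auto
    finally show "(\<integral>\<^sup>+\<omega>. ((f (\<lambda>i. g (ts i) (X (ts i) \<omega>))
        - f (\<lambda>i. g (ts i) (KL_sum (KL_trunc M X e \<epsilon>) (ts i) \<omega>)))\<^sup>2) \<partial>M) \<le> C * \<epsilon>\<^sup>2"
      unfolding L_def .
  qed
qed

end
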